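(* Let $S=\{p_1,\dots,p_m\}$ be a finite set of possibly partial probability distributions, all with the same total mass $\textsc{Mass}(S)>0$. Let $\textsc{OPT}_S$ be a minimum-entropy coupling of $S$. Then $$H(\textsc{OPT}_S)\ \ge\ H(\textsc{Profile}_S)\triangleq\int_0^{\textsc{Mass}(S)}\log_2\!\left(\frac{1}{\textsc{Profile}_S(x)}\right)dx .$$
   Context: A possibly partial distribution $p$ is a finite vector of nonnegative reals $p(1)\ge p(2)\ge\dots\ge p(n)$ (always sorted in non-increasing order) with total mass $\textsc{Mass}(p)=\sum_j p(j)\le 1$. A coupling of $p_1,\dots,p_m$ is a nonnegative array $\mathcal C(i_1,\dots,i_m)$ such that for every $k$ and every state $i_k$, the sum of $\mathcal C$ over all tuples with $k$-th coordinate $i_k$ equals $p_k(i_k)$. Its entropy is $H(\mathcal C)=\sum \mathcal C(i)\log_2(1/\mathcal C(i))$ (with $0\log(1/0)=0$); $\textsc{OPT}_S$ is a coupling of minimum entropy. For a possibly partial distribution $p$, $\textsc{Sketch}_p:(0,\textsc{Mass}(p)]\to\mathbb R$ is defined by $\textsc{Sketch}_p(x)=p(i)$ for $x\in\big(\sum_{j>i}p(j),\sum_{j\ge i}p(j)\big]$. The profile is $\textsc{Profile}_S(x)=\min_{p\in S}\textsc{Sketch}_p(x)$ for $x\in(0,\textsc{Mass}(S)]$. *)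

theory Defs
  imports "HOL-Analysis.Analysis"
begin

definition partial_dist :: "real list \<Rightarrow> bool" where
  "partial_dist p \<longleftrightarrow> (\<forall>x\<in>set p. 0 \<le> x) \<and> sorted_wrt (\<ge>) p \<and> sum_list p \<le> 1"

definition mass :: "real list \<Rightarrow> real" where
  "mass p = sum_list p"

definition tuples :: "real list list \<Rightarrow> nat list set" where
  "tuples ps = {i. length i = length ps \<and> (\<forall>k<length ps. i ! k < length (ps ! k))}"

definition is_coupling :: "real list list \<Rightarrow> (nat list \<Rightarrow> real) \<Rightarrow> bool" where
  "is_coupling ps C \<longleftrightarrow>
     (\<forall>i\<in>tuples ps. 0 \<le> C i) \<and>
     (\<forall>k<length ps. \<forall>j<length (ps ! k).
        (\<Sum>i\<in>{i\<in>tuples ps. i ! k = j}. C i) = ps ! k ! j)"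

definition entropy :: "real list list \<Rightarrow> (nat list \<Rightarrow> real) \<Rightarrow> real" where
  "entropy ps C = (\<Sum>i\<in>tuples ps. if C i = 0 then 0 else C i * log 2 (1 / C i))"

definition min_entropy_coupling :: "real list list \<Rightarrow> (nat list \<Rightarrow> real) \<Rightarrow> bool" where
  "min_entropy_coupling ps C \<longleftrightarrow>
     is_coupling ps C \<and> (\<forall>C'. is_coupling ps C' \<longrightarrow> entropy ps C \<le> entropy ps C')"

definition sketch :: "real list \<Rightarrow> real \<Rightarrow> real" where
  "sketch p x = p ! (THE i. i < length p \<and> sum_list (drop (Suc i) p) < x \<and> x \<le> sum_list (drop i p))"

definition profile :: "real list list \<Rightarrow> real \<Rightarrow> real" where
  "profile ps x = Min ((\<lambda>p. sketch p x) ` set ps)"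

end

theory Submission
  imports Defs
begin

(* Sort the cell masses of a coupling C decreasingly into a list c.  Then H(C) is exactly the
   integral of log (1 / Sketch_c) over (0, M].  Every entry of a marginal p that is smaller than
   a threshold v is a sum of cells of C smaller than v, so the mass of p below v never exceeds
   the mass of c below v.  This majorisation forces Sketch_c(x) \<le> Sketch_p(x) for every x and
   every p, hence Sketch_c \<le> Profile_S, and comparing integrands gives the bound. *)

(* No case split at 0 is needed, since 1 / 0 = 0 makes the product vanish there. *)
definition entropy_term :: "real \<Rightarrow> real" where
  "entropy_term y = y * log 2 (1 / y)"

lemma entropy_term_nonneg:
  assumes "0 \<le> y" and "y \<le> 1"
  shows "0 \<le> entropy_term y"
proof (cases "y = 0")
  case False
  then have "0 < y" and "1 \<le> 1 / y"
    using assms by auto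
  then have "0 \<le> log 2 (1 / y)"
    by simp
  then show ?thesis
    using assms(1) by (simp add: entropy_term_def)
qed (simp add: entropy_term_def)

definition below :: "real \<Rightarrow> real \<Rightarrow> real" where
  "below v y = (if y < v then y else 0)"

definition mass_below :: "real \<Rightarrow> real list \<Rightarrow> real" where
  "mass_below v p = sum_list (map (below v) p)"

lemma mass_below_append [simp]: "mass_below v (xs @ ys) = mass_below v xs + mass_below v ys"
  by (simp add: mass_below_def)

lemma mass_below_nonneg: "\<forall>y\<in>set p. 0 \<le> y \<Longrightarrow> 0 \<le> mass_below v p"
  unfolding mass_below_def by (intro sum_list_nonneg) (auto simp: below_def)

lemma mass_below_le_sum_list:
  assumes "\<forall>y\<in>set p. 0 \<le> y"
  shows "mass_below v p \<le> sum_list p"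
proof -
  have "sum_list (map (below v) p) \<le> sum_list (map (\<lambda>y. y) p)"
    using assms by (intro sum_list_mono) (simp add: below_def)
  then show ?thesis
    by (simp add: mass_below_def)
qed

lemma sum_list_drop_antimono:
  fixes p :: "real list"
  assumes "\<forall>y\<in>set p. 0 \<le> y" and "i \<le> j"
  shows "sum_list (drop j p) \<le> sum_list (drop i p)"
proof -
  have "sum_list (drop i p) = sum_list (take (j - i) (drop i p)) + sum_list (drop (j - i) (drop i p))"
    by (simp only: append_take_drop_id flip: sum_list_append)
  also have "drop (j - i) (drop i p) = drop j p"
    using assms(2) by simp
  finally have "sum_list (drop i p) = sum_list (take (j - i) (drop i p)) + sum_list (drop j p)" .
  moreover have "0 \<le> sum_list (take (j - i) (drop i p))"
    using assms(1) by (intro sum_list_nonneg) (auto dest: in_set_takeD in_set_dropD)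
  ultimately show ?thesis
    by linarith
qed

lemma sketch_eq_nth:
  fixes p :: "real list"
  assumes nonneg: "\<forall>y\<in>set p. 0 \<le> y" and i: "i < length p"
    and "sum_list (drop (Suc i) p) < x" and "x \<le> sum_list (drop i p)"
  shows "sketch p x = p ! i"
proof -
  have unique: "j = i" if "sum_list (drop (Suc j) p) < x" and "x \<le> sum_list (drop j p)" for j
  proof (rule ccontr)
    assume "j \<noteq> i"
    then consider "Suc j \<le> i" | "Suc i \<le> j"
      by linarith
    then show False
    proof cases
      case 1
      then show False
        using that assms(4) sum_list_drop_antimono[OF nonneg, of "Suc j" i] by linarith
    next
      case 2
      then show False
        using that assms(3) sum_list_drop_antimono[OF nonneg, of "Suc i" j] by linarith
    qed
  qed
  have "(THE j. j < length p \<and> sum_list (drop (Suc j) p) < x \<and> x \<le> sum_list (drop j p)) = i"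
  proof (rule the_equality)
    show "i < length p \<and> sum_list (drop (Suc i) p) < x \<and> x \<le> sum_list (drop i p)"
      using assms by simp
  qed (use unique in blast)
  then show ?thesis
    unfolding sketch_def by simp
qed

lemma sketch_index:
  fixes p :: "real list"
  assumes nonneg: "\<forall>y\<in>set p. 0 \<le> y" and "0 < x" and "x \<le> sum_list p"
  obtains i where "i < length p" and "sum_list (drop (Suc i) p) < x"
    and "x \<le> sum_list (drop i p)" and "sketch p x = p ! i"
proof -
  have "\<exists>i<length p. sum_list (drop (Suc i) p) < x \<and> x \<le> sum_list (drop i p)"
    using assms
  proof (induction p)
    case (Cons a p)
    show ?case
    proof (cases "x \<le> sum_list p")
      case True
      then obtain i where "i < length p" "sum_list (drop (Suc i) p) < x" "x \<le> sum_list (drop i p)"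
        using Cons by auto
      then show ?thesis
        by (intro exI[of _ "Suc i"]) auto
    next
      case False
      then show ?thesis
        using Cons.prems by (intro exI[of _ 0]) auto
    qed
  qed simp
  then show ?thesis
    using sketch_eq_nth[OF nonneg] that by blast
qed

lemma sketch_pos:
  fixes p :: "real list"
  assumes "\<forall>y\<in>set p. 0 \<le> y" and "0 < x" and "x \<le> sum_list p"
  shows "0 < sketch p x"
proof -
  obtain i where "i < length p" "sum_list (drop (Suc i) p) < x" "x \<le> sum_list (drop i p)"
    and "sketch p x = p ! i"
    using sketch_index[OF assms] by blast
  then show ?thesis
    by (simp flip: Cons_nth_drop_Suc)
qed

lemma has_integral_log_inverse_sketch:
  fixes c :: "real list"
  assumes "\<forall>y\<in>set c. 0 \<le> y"
  shows "((\<lambda>x. log 2 (1 / sketch c x)) has_integral sum_list (map entropy_term c)) {0..sum_list c}"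
  using assms
proof (induction c)
  case Nil
  then show ?case
    using has_integral_refl(2) by simp
next
  case (Cons a c)
  define M where "M = sum_list c"
  have c_nonneg: "\<forall>y\<in>set c. 0 \<le> y" and "0 \<le> a"
    using Cons.prems by auto
  have "0 \<le> M"
    unfolding M_def using c_nonneg by (simp add: sum_list_nonneg)
  have lower: "((\<lambda>x. log 2 (1 / sketch (a # c) x)) has_integral sum_list (map entropy_term c)) {0..M}"
  proof (rule has_integral_spike_finite[of "{0}"])
    show "((\<lambda>x. log 2 (1 / sketch c x)) has_integral sum_list (map entropy_term c)) {0..M}"
      using Cons.IH c_nonneg M_def by simp
  next
    fix x
    assume "x \<in> {0..M} - {0}"
    then have "0 < x" and "x \<le> sum_list c"
      using M_def by auto
    then obtain i where i: "i < length c" "sum_list (drop (Suc i) c) < x" "x \<le> sum_list (drop i c)"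
      and "sketch c x = c ! i"
      using sketch_index[OF c_nonneg] by blast
    moreover have "sketch (a # c) x = (a # c) ! Suc i"
      using sketch_eq_nth[OF Cons.prems, of "Suc i" x] i by simp
    ultimately show "log 2 (1 / sketch (a # c) x) = log 2 (1 / sketch c x)"
      by simp
  qed simp
  have upper: "((\<lambda>x. log 2 (1 / sketch (a # c) x)) has_integral entropy_term a) {M..M + a}"
  proof (rule has_integral_spike_finite[of "{M}"])
    show "((\<lambda>x. log 2 (1 / a)) has_integral entropy_term a) {M..M + a}"
      using has_integral_const_real[of "log 2 (1 / a)" M "M + a"] \<open>0 \<le> a\<close>
      by (simp add: entropy_term_def)
  next
    fix x
    assume "x \<in> {M..M + a} - {M}"
    then have "sketch (a # c) x = (a # c) ! 0"
      using sketch_eq_nth[OF Cons.prems, of 0 x] M_def by simp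
    then show "log 2 (1 / sketch (a # c) x) = log 2 (1 / a)"
      by simp
  qed simp
  show ?case
    using has_integral_combine[OF \<open>0 \<le> M\<close> _ lower upper] \<open>0 \<le> a\<close> M_def
    by (simp add: add.commute)
qed

lemma sorted_desc_drop_le_nth:
  fixes p :: "'a::order list"
  assumes "sorted_wrt (\<ge>) p" and "i < length p" and "y \<in> set (drop i p)"
  shows "y \<le> p ! i"
proof -
  have "sorted_wrt (\<ge>) (p ! i # drop (Suc i) p)"
    using sorted_wrt_drop[OF assms(1), of i] assms(2) by (simp add: Cons_nth_drop_Suc)
  moreover have "y \<in> set (p ! i # drop (Suc i) p)"
    using assms(2,3) by (simp add: Cons_nth_drop_Suc)
  ultimately show ?thesis
    by auto
qed

lemma sorted_desc_nth_le_take: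
  fixes p :: "'a::order list"
  assumes "sorted_wrt (\<ge>) p" and "i < length p" and "y \<in> set (take (Suc i) p)"
  shows "p ! i \<le> y"
proof -
  have "sorted_wrt (\<ge>) (take i p @ [p ! i])"
    using sorted_wrt_take[OF assms(1), of "Suc i"] assms(2) by (simp add: take_Suc_conv_app_nth)
  moreover have "y \<in> set (take i p @ [p ! i])"
    using assms(2,3) by (simp add: take_Suc_conv_app_nth)
  ultimately show ?thesis
    by (auto simp: sorted_wrt_append)
qed

lemma sum_list_drop_le_mass_below:
  fixes p :: "real list"
  assumes "\<forall>y\<in>set p. 0 \<le> y" and "sorted_wrt (\<ge>) p" and "i < length p" and "p ! i < v"
  shows "sum_list (drop i p) \<le> mass_below v p"
proof -
  have "map (below v) (drop i p) = drop i p"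
    using sorted_desc_drop_le_nth[OF assms(2,3)] assms(4) by (intro map_idI) (force simp: below_def)
  then have "mass_below v (drop i p) = sum_list (drop i p)"
    by (simp add: mass_below_def)
  moreover have "0 \<le> mass_below v (take i p)"
    using assms(1) by (intro mass_below_nonneg) (auto dest: in_set_takeD)
  ultimately show ?thesis
    using mass_below_append[of v "take i p" "drop i p"] by simp
qed

lemma mass_below_le_sum_list_drop_Suc:
  fixes p :: "real list"
  assumes "\<forall>y\<in>set p. 0 \<le> y" and "sorted_wrt (\<ge>) p" and "i < length p" and "v \<le> p ! i"
  shows "mass_below v p \<le> sum_list (drop (Suc i) p)"
proof -
  have "map (below v) (take (Suc i) p) = map (\<lambda>_. 0) (take (Suc i) p)"
    using sorted_desc_nth_le_take[OF assms(2,3)] assms(4) by (force simp: below_def)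
  then have "mass_below v (take (Suc i) p) = 0"
    unfolding mass_below_def by (simp add: map_replicate_const sum_list_replicate)
  moreover have "mass_below v (drop (Suc i) p) \<le> sum_list (drop (Suc i) p)"
    using assms(1) by (intro mass_below_le_sum_list) (auto dest: in_set_dropD)
  ultimately show ?thesis
    using mass_below_append[of v "take (Suc i) p" "drop (Suc i) p"] by simp
qed

lemma sketch_le_if_mass_below_le:
  fixes p q :: "real list"
  assumes p: "\<forall>y\<in>set p. 0 \<le> y" "sorted_wrt (\<ge>) p"
    and q: "\<forall>y\<in>set q. 0 \<le> y" "sorted_wrt (\<ge>) q"
    and x: "0 < x" "x \<le> sum_list p" "x \<le> sum_list q"
    and mass_below_le: "\<And>v. mass_below v p \<le> mass_below v q"
  shows "sketch q x \<le> sketch p x"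
proof (rule ccontr)
  obtain i where i: "i < length p" "x \<le> sum_list (drop i p)" "sketch p x = p ! i"
    using sketch_index[OF p(1) x(1,2)] by blast
  obtain j where j: "j < length q" "sum_list (drop (Suc j) q) < x" "sketch q x = q ! j"
    using sketch_index[OF q(1) x(1,3)] by blast
  assume "\<not> sketch q x \<le> sketch p x"
  then have "p ! i < q ! j"
    using i j by simp
  have "x \<le> mass_below (q ! j) p"
    using sum_list_drop_le_mass_below[OF p i(1) \<open>p ! i < q ! j\<close>] i(2) by linarith
  also have "\<dots> \<le> mass_below (q ! j) q"
    by (rule mass_below_le)
  also have "\<dots> < x"
    using mass_below_le_sum_list_drop_Suc[OF q j(1) order_refl] j(2) by linarith
  finally show False
    by simp
qed

lemma sketch_le_profile_if_mass_below_le: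
  fixes c :: "real list"
  assumes "ps \<noteq> []" and dist: "\<forall>p\<in>set ps. partial_dist p" and mass: "\<forall>p\<in>set ps. mass p = M"
    and "\<forall>y\<in>set c. 0 \<le> y" and "sorted_wrt (\<ge>) c" and "sum_list c = M"
    and mass_below_le: "\<And>p v. p \<in> set ps \<Longrightarrow> mass_below v p \<le> mass_below v c"
    and "0 < x" and "x \<le> M"
  shows "sketch c x \<le> profile ps x"
proof -
  have "sketch c x \<le> sketch p x" if "p \<in> set ps" for p
    using that assms by (intro sketch_le_if_mass_below_le) (auto simp: partial_dist_def mass_def)
  then show ?thesis
    using \<open>ps \<noteq> []\<close> by (simp add: profile_def)
qed

lemma finite_tuples: "finite (tuples ps)"
proof -
  have "tuples ps = set (product_lists (map (\<lambda>p. [0..<length p]) ps))"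
    by (auto simp: tuples_def product_lists_set list_all2_conv_all_nth)
  then show ?thesis
    by simp
qed

lemma sum_tuples_by_coordinate:
  assumes "k < length ps"
  shows "(\<Sum>t\<in>tuples ps. f t) = (\<Sum>j<length (ps ! k). \<Sum>t\<in>{t\<in>tuples ps. t ! k = j}. f t)"
  by (rule sum.group[symmetric]) (use finite_tuples assms in \<open>auto simp: tuples_def\<close>)

lemma coupling_le_marginal:
  assumes C: "is_coupling ps C" and k: "k < length ps" and t: "t \<in> tuples ps"
  shows "C t \<le> ps ! k ! (t ! k)"
proof -
  have "t ! k < length (ps ! k)"
    using t k by (auto simp: tuples_def)
  then have "ps ! k ! (t ! k) = (\<Sum>s\<in>{s\<in>tuples ps. s ! k = t ! k}. C s)"
    using C k by (simp add: is_coupling_def)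
  moreover have "C t \<le> (\<Sum>s\<in>{s\<in>tuples ps. s ! k = t ! k}. C s)"
    using C t finite_tuples[of ps] by (intro member_le_sum) (auto simp: is_coupling_def)
  ultimately show ?thesis
    by simp
qed

lemma sum_coupling_eq_mass:
  assumes "is_coupling ps C" and "k < length ps"
  shows "(\<Sum>t\<in>tuples ps. C t) = sum_list (ps ! k)"
  using assms by (simp add: sum_tuples_by_coordinate is_coupling_def sum_list_sum_nth atLeast0LessThan)

lemma mass_below_marginal_le_coupling:
  assumes C: "is_coupling ps C" and k: "k < length ps"
  shows "mass_below v (ps ! k) \<le> (\<Sum>t\<in>tuples ps. below v (C t))"
proof -
  have fiber_bound: "below v (ps ! k ! j) \<le> (\<Sum>t\<in>{t\<in>tuples ps. t ! k = j}. below v (C t))"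
    if j: "j < length (ps ! k)" for j
  proof (cases "ps ! k ! j < v")
    case True
    have "C t < v" if "t \<in> tuples ps" and "t ! k = j" for t
      using coupling_le_marginal[OF C k that(1)] that(2) True by simp
    then have "(\<Sum>t\<in>{t\<in>tuples ps. t ! k = j}. below v (C t)) = (\<Sum>t\<in>{t\<in>tuples ps. t ! k = j}. C t)"
      by (intro sum.cong) (auto simp: below_def)
    then show ?thesis
      using C k j True by (simp add: is_coupling_def below_def)
  next
    case False
    then show ?thesis
      using C by (auto simp: below_def is_coupling_def intro!: sum_nonneg)
  qed
  have "mass_below v (ps ! k) = (\<Sum>j<length (ps ! k). below v (ps ! k ! j))"
    by (simp add: mass_below_def sum_list_sum_nth atLeast0LessThan)
  also have "\<dots> \<le> (\<Sum>j<length (ps ! k). \<Sum>t\<in>{t\<in>tuples ps. t ! k = j}. below v (C t))"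
    using fiber_bound by (intro sum_mono) simp
  also have "\<dots> = (\<Sum>t\<in>tuples ps. below v (C t))"
    by (rule sum_tuples_by_coordinate[OF k, symmetric])
  finally show ?thesis .
qed

lemma entropy_coupling_nonneg:
  assumes C: "is_coupling ps C" and k: "k < length ps" and "sum_list (ps ! k) \<le> 1"
  shows "0 \<le> entropy ps C"
proof -
  have "0 \<le> entropy_term (C t)" if t: "t \<in> tuples ps" for t
  proof (rule entropy_term_nonneg)
    show "0 \<le> C t"
      using C t by (simp add: is_coupling_def)
    have "C t \<le> (\<Sum>s\<in>tuples ps. C s)"
      using C t finite_tuples[of ps] by (intro member_le_sum) (auto simp: is_coupling_def)
    then show "C t \<le> 1"
      using sum_coupling_eq_mass[OF C k] assms(3) by linarith
  qed
  then show ?thesis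
    unfolding entropy_def entropy_term_def by (simp add: sum_nonneg)
qed

lemma obtain_sorted_value_list:
  fixes f :: "'a \<Rightarrow> real"
  assumes "finite T"
  obtains c where "sorted_wrt (\<ge>) c" and "set c = f ` T"
    and "\<And>g :: real \<Rightarrow> real. sum_list (map g c) = (\<Sum>t\<in>T. g (f t))"
proof -
  obtain xs where xs: "distinct xs" "set xs = T"
    using finite_distinct_list[OF assms] by blast
  define c where "c = rev (sort (map f xs))"
  have c_sum: "sum_list (map g c) = (\<Sum>t\<in>T. g (f t))" for g :: "real \<Rightarrow> real"
  proof -
    have "sum_list (map g c) = sum_mset (image_mset g (mset c))"
      by (simp flip: sum_mset_sum_list)
    also have "\<dots> = sum_list (map g (map f xs))"
      by (simp add: c_def multiset.map_comp flip: sum_mset_sum_list)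
    also have "\<dots> = (\<Sum>t\<in>T. g (f t))"
      using xs by (simp add: sum_list_distinct_conv_sum_set)
    finally show ?thesis .
  qed
  show ?thesis
  proof (rule that)
    show "sorted_wrt (\<ge>) c"
      by (simp add: c_def sorted_wrt_rev)
    show "set c = f ` T"
      using xs by (simp add: c_def)
  qed (rule c_sum)
qed

(* The hypothesis 0 \<le> I covers a non-integrable f, whose integral is 0 by convention. *)
lemma integral_le_has_integral_nonneg:
  fixes f g :: "real \<Rightarrow> real"
  assumes g: "(g has_integral I) {a..b}" and "0 \<le> I"
    and le: "\<And>x. a < x \<Longrightarrow> x \<le> b \<Longrightarrow> f x \<le> g x"
  shows "integral {a..b} f \<le> I"
proof (cases "f integrable_on {a..b}")
  case True
  define g' where "g' x = (if x = a then f x else g x)" for x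
  have "(g' has_integral I) {a..b}"
    by (rule has_integral_spike_finite[of "{a}" _ _ g]) (use g in \<open>auto simp: g'_def\<close>)
  moreover have "f x \<le> g' x" if "x \<in> {a..b}" for x
    using that le by (auto simp: g'_def)
  ultimately show ?thesis
    using True by (metis integral_le integral_unique has_integral_integrable)
next
  case False
  then show ?thesis
    using \<open>0 \<le> I\<close> by (simp add: not_integrable_integral)
qed

lemma coupling_entropy_ge_profile_integral:
  assumes "ps \<noteq> []" and dist: "\<forall>p\<in>set ps. partial_dist p" and mass: "\<forall>p\<in>set ps. mass p = M"
    and C: "is_coupling ps C"
  shows "integral {0..M} (\<lambda>x. log 2 (1 / profile ps x)) \<le> entropy ps C"
proof -
  obtain c where c_sorted: "sorted_wrt (\<ge>) c" and c_set: "set c = C ` tuples ps"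
    and c_sum: "\<And>g :: real \<Rightarrow> real. sum_list (map g c) = (\<Sum>t\<in>tuples ps. g (C t))"
    using obtain_sorted_value_list[OF finite_tuples] by blast
  have c_nonneg: "\<forall>y\<in>set c. 0 \<le> y"
    using C c_set by (auto simp: is_coupling_def)
  have "0 < length ps" and "ps ! 0 \<in> set ps"
    using \<open>ps \<noteq> []\<close> by auto
  have c_mass: "sum_list c = M"
    using c_sum[of id] sum_coupling_eq_mass[OF C \<open>0 < length ps\<close>] mass \<open>ps ! 0 \<in> set ps\<close>
    by (simp add: mass_def)
  have c_entropy: "sum_list (map entropy_term c) = entropy ps C"
    unfolding c_sum entropy_def entropy_term_def by (rule sum.cong) auto
  have "mass_below v p \<le> mass_below v c" if "p \<in> set ps" for p v
  proof -
    obtain k where "k < length ps" and "p = ps ! k"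
      using \<open>p \<in> set ps\<close> by (auto simp: in_set_conv_nth)
    then show ?thesis
      using mass_below_marginal_le_coupling[OF C, of k v] c_sum[of "below v"]
      by (simp add: mass_below_def)
  qed
  then have sketch_le_profile: "sketch c x \<le> profile ps x" if "0 < x" and "x \<le> M" for x
    using sketch_le_profile_if_mass_below_le[OF \<open>ps \<noteq> []\<close> dist mass c_nonneg c_sorted c_mass]
      that by blast
  have "log 2 (1 / profile ps x) \<le> log 2 (1 / sketch c x)" if "0 < x" and "x \<le> M" for x
  proof -
    have "0 < sketch c x"
      using sketch_pos[OF c_nonneg] that c_mass by simp
    then show ?thesis
      using sketch_le_profile[OF that] by (simp add: frac_le)
  qed
  moreover have "0 \<le> entropy ps C"
    using entropy_coupling_nonneg[OF C \<open>0 < length ps\<close>] dist \<open>ps ! 0 \<in> set ps\<close>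
    by (simp add: partial_dist_def)
  ultimately show ?thesis
    using integral_le_has_integral_nonneg has_integral_log_inverse_sketch[OF c_nonneg]
    by (simp add: c_mass c_entropy)
qed

theorem theorem1:
  fixes ps :: "real list list" and M :: real and OPT :: "nat list \<Rightarrow> real"
  assumes "ps \<noteq> []"
    and "\<forall>p\<in>set ps. partial_dist p"
    and "\<forall>p\<in>set ps. mass p = M"
    and "M > 0"
    and "min_entropy_coupling ps OPT"
  shows "entropy ps OPT \<ge> integral {0..M} (\<lambda>x. log 2 (1 / profile ps x))"
  using coupling_entropy_ge_profile_integral[OF assms(1-3)] assms(5)
  by (simp add: min_entropy_coupling_def)

end
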